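(* Let $M$ be a matroid on a finite set $E(M)$ and $\lambda\colon E(M)\to\mathbb{N}$. Choose pairwise disjoint finite sets $E_e$ ($e\in E(M)$) with $\#E_e=\lambda(e)$ and $e\in E_e$, and put $E(M_\lambda)=\bigsqcup_{e\in E(M)}E_e$. Let $\mathcal{B}(M_\lambda)$ be the collection of all subsets $B\subseteq E(M_\lambda)$ for which there are a basis $B'$ of $M$ and elements $x_e\in E_e$ for each $e\in E(M)-B'$ such that $B=E(M_\lambda)-\{x_e : e\notin B'\}$. Then $\mathcal{B}(M_\lambda)$ is the set of bases of a matroid on $E(M_\lambda)$.
   Context: $\mathbb{N}$ denotes the positive integers. *)

theory Defs
  imports Main
begin

definition matroid_bases :: "'a set \<Rightarrow> 'a set set \<Rightarrow> bool" where
  "matroid_bases E \<B> \<longleftrightarrow>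
     finite E \<and> \<B> \<noteq> {} \<and> (\<forall>B\<in>\<B>. B \<subseteq> E) \<and>
     (\<forall>B1\<in>\<B>. \<forall>B2\<in>\<B>. \<forall>x\<in>B1 - B2. \<exists>y\<in>B2 - B1. insert y (B1 - {x}) \<in> \<B>)"

end

theory Submission
  imports Defs
begin

text \<open>Every element e of M is replaced by the block Ee e of elements in series: a basis
  keeps every block in full, except that one chosen element is dropped from each block of
  an element outside the underlying basis B' of M. For basis exchange, let z lie in B1 but
  not in B2, with z in the block of e. Then z is the element dropped from that block by B2,
  so e is outside B2'. If e is in B1', exchanging e in M for some f in B2' - B1' lets z be
  dropped instead of e's block being kept in full, and the element previously dropped from
  the block of f comes back. If e is outside B1', z simply takes over the role of the
  element dropped from the block of e.\<close>

locale series_blocks =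
  fixes E :: "'a set" and Ee :: "'a \<Rightarrow> 'a set"
  assumes disjoint_blocks: "\<And>e f. e \<in> E \<Longrightarrow> f \<in> E \<Longrightarrow> e \<noteq> f \<Longrightarrow> Ee e \<inter> Ee f = {}"
begin

definition ground :: "'a set" where
  "ground = (\<Union>e\<in>E. Ee e)"

definition choice_outside :: "'a set \<Rightarrow> ('a \<Rightarrow> 'a) \<Rightarrow> bool" where
  "choice_outside B' x \<longleftrightarrow> (\<forall>e\<in>E - B'. x e \<in> Ee e)"

definition lift :: "'a set \<Rightarrow> ('a \<Rightarrow> 'a) \<Rightarrow> 'a set" where
  "lift B' x = ground - x ` (E - B')"

definition series_bases :: "'a set set \<Rightarrow> 'a set set" where
  "series_bases \<B> = {B. \<exists>B'\<in>\<B>. \<exists>x. choice_outside B' x \<and> B = lift B' x}"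

lemma block_eqI:
  assumes "g \<in> E" "h \<in> E" "w \<in> Ee g" "w \<in> Ee h"
  shows "g = h"
  using assms disjoint_blocks by blast

lemma choice_outside_insert:
  "choice_outside B' x \<Longrightarrow> choice_outside (insert f B') x"
  unfolding choice_outside_def by blast

lemma choice_outside_update:
  "choice_outside B' x \<Longrightarrow> z \<in> Ee e \<Longrightarrow> choice_outside (B' - {e}) (x(e := z))"
  unfolding choice_outside_def by auto

lemma mem_chosen_iff:
  assumes "choice_outside B' x" "g \<in> E" "w \<in> Ee g"
  shows "w \<in> x ` (E - B') \<longleftrightarrow> g \<notin> B' \<and> w = x g"
proof
  assume "w \<in> x ` (E - B')"
  then obtain h where h: "h \<in> E - B'" "w = x h" by blast
  with assms(1) have "w \<in> Ee h" unfolding choice_outside_def by blast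
  with assms(2,3) h have "h = g" using block_eqI by blast
  with h show "g \<notin> B' \<and> w = x g" by blast
qed (use assms(2) in blast)

lemma mem_lift_iff:
  assumes "choice_outside B' x" "g \<in> E" "w \<in> Ee g"
  shows "w \<in> lift B' x \<longleftrightarrow> g \<in> B' \<or> w \<noteq> x g"
  using mem_chosen_iff[OF assms] assms(2,3) unfolding lift_def ground_def by blast

lemma lift_insert:
  assumes x: "choice_outside B' x" and f: "f \<in> E" "f \<notin> B'"
  shows "lift (insert f B') x = insert (x f) (lift B' x)"
proof -
  have xf: "x f \<in> Ee f"
    using x f unfolding choice_outside_def by blast
  have "x f \<notin> x ` (E - insert f B')"
    using mem_chosen_iff[OF choice_outside_insert[OF x] f(1) xf] by blast
  moreover have "x ` (E - B') = insert (x f) (x ` (E - insert f B'))"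
    using f by blast
  moreover have "x f \<in> ground"
    using f(1) xf unfolding ground_def by blast
  ultimately show ?thesis
    unfolding lift_def by auto
qed

lemma lift_update_remove:
  assumes "e \<in> E" "e \<in> B'"
  shows "lift (B' - {e}) (x(e := z)) = lift B' x - {z}"
proof -
  have "(x(e := z)) ` (E - (B' - {e})) = insert z (x ` (E - B'))"
    using assms by auto
  then show ?thesis
    unfolding lift_def by blast
qed

lemma series_exchange:
  assumes M: "matroid_bases E \<B>"
    and B1': "B1' \<in> \<B>" and x1: "choice_outside B1' x1"
    and B2': "B2' \<in> \<B>" and x2: "choice_outside B2' x2"
    and z: "z \<in> lift B1' x1 - lift B2' x2"
  shows "\<exists>y\<in>lift B2' x2 - lift B1' x1. insert y (lift B1' x1 - {z}) \<in> series_bases \<B>"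
proof -
  obtain e where e: "e \<in> E" "z \<in> Ee e"
    using z unfolding lift_def ground_def by blast
  have e2: "e \<notin> B2'" "z = x2 e"
    using z mem_lift_iff[OF x2 e] by auto
  have e1: "e \<in> B1' \<or> z \<noteq> x1 e"
    using z mem_lift_iff[OF x1 e] by auto
  define x3 where "x3 = x1(e := z)"
  show ?thesis
  proof (cases "e \<in> B1'")
    case True
    then obtain f where f: "f \<in> B2' - B1'" and B3: "insert f (B1' - {e}) \<in> \<B>"
      using M B1' B2' e2(1) unfolding matroid_bases_def by blast
    have fE: "f \<in> E" "f \<noteq> e"
      using f B2' M True unfolding matroid_bases_def by blast+
    have x1f: "x1 f \<in> Ee f"
      using x1 f fE unfolding choice_outside_def by blast
    have x3: "choice_outside (insert f (B1' - {e})) x3"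
      unfolding x3_def by (intro choice_outside_insert choice_outside_update x1 e)
    have "lift (insert f (B1' - {e})) x3 = insert (x1 f) (lift B1' x1 - {z})"
      using lift_insert[OF choice_outside_update[OF x1 e(2)], of f] f fE
        lift_update_remove[OF e(1) True]
      unfolding x3_def by simp
    moreover have "x1 f \<in> lift B2' x2 - lift B1' x1"
      using mem_lift_iff[OF x1 fE(1) x1f] mem_lift_iff[OF x2 fE(1) x1f] f by blast
    ultimately show ?thesis
      using B3 x3 unfolding series_bases_def by blast
  next
    case False
    have x1e: "x1 e \<in> Ee e"
      using x1 e False unfolding choice_outside_def by blast
    have x3: "choice_outside B1' x3"
      using choice_outside_update[OF choice_outside_insert[OF x1] e(2), of e] False
      unfolding x3_def by simp
    have "lift B1' x3 = lift (insert e B1') x1 - {z}"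
      using lift_update_remove[OF e(1), of "insert e B1'" x1 z] False
      unfolding x3_def by simp
    also have "\<dots> = insert (x1 e) (lift B1' x1 - {z})"
      using lift_insert[OF x1 e(1) False] e1 False by blast
    finally have "lift B1' x3 = insert (x1 e) (lift B1' x1 - {z})" .
    moreover have "x1 e \<in> lift B2' x2 - lift B1' x1"
      using mem_lift_iff[OF x1 e(1) x1e] mem_lift_iff[OF x2 e(1) x1e] e1 e2 False by auto
    ultimately show ?thesis
      using B1' x3 unfolding series_bases_def by blast
  qed
qed

lemma series_bases_nonempty:
  assumes "\<B> \<noteq> {}" and nonempty: "\<And>e. e \<in> E \<Longrightarrow> Ee e \<noteq> {}"
  shows "series_bases \<B> \<noteq> {}"
proof -
  obtain B' where "B' \<in> \<B>"
    using assms(1) by blast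
  moreover have "choice_outside B' (\<lambda>e. SOME w. w \<in> Ee e)"
    unfolding choice_outside_def using nonempty by (simp add: some_in_eq)
  ultimately show ?thesis
    unfolding series_bases_def by blast
qed

theorem matroid_bases_series_bases:
  assumes M: "matroid_bases E \<B>"
    and finite_blocks: "\<And>e. e \<in> E \<Longrightarrow> finite (Ee e)"
    and nonempty_blocks: "\<And>e. e \<in> E \<Longrightarrow> Ee e \<noteq> {}"
  shows "matroid_bases ground (series_bases \<B>)"
  unfolding matroid_bases_def
proof (intro conjI ballI)
  show "finite ground"
    using M finite_blocks unfolding ground_def matroid_bases_def by blast
  have "\<B> \<noteq> {}"
    using M unfolding matroid_bases_def by blast
  then show "series_bases \<B> \<noteq> {}"
    using nonempty_blocks by (rule series_bases_nonempty)
  show "B \<subseteq> ground" if "B \<in> series_bases \<B>" for B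
    using that unfolding series_bases_def lift_def by blast
  show "\<exists>y\<in>B2 - B1. insert y (B1 - {z}) \<in> series_bases \<B>"
    if B1: "B1 \<in> series_bases \<B>" and B2: "B2 \<in> series_bases \<B>" and z: "z \<in> B1 - B2"
    for B1 B2 z
  proof -
    obtain B1' x1 where "B1' \<in> \<B>" "choice_outside B1' x1" "B1 = lift B1' x1"
      using B1 unfolding series_bases_def by blast
    moreover obtain B2' x2 where "B2' \<in> \<B>" "choice_outside B2' x2" "B2 = lift B2' x2"
      using B2 unfolding series_bases_def by blast
    ultimately show ?thesis
      using series_exchange[OF M] z by blast
  qed
qed

end

theorem proposition3p3:
  fixes E :: "'a set" and \<B> :: "'a set set" and lam :: "'a \<Rightarrow> nat"
    and Ee :: "'a \<Rightarrow> 'a set"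
  assumes M: "matroid_bases E \<B>"
    and lam_pos: "\<And>e. e \<in> E \<Longrightarrow> lam e > 0"
    and fin: "\<And>e. e \<in> E \<Longrightarrow> finite (Ee e)"
    and card: "\<And>e. e \<in> E \<Longrightarrow> card (Ee e) = lam e"
    and mem: "\<And>e. e \<in> E \<Longrightarrow> e \<in> Ee e"
    and disj: "\<And>e f. e \<in> E \<Longrightarrow> f \<in> E \<Longrightarrow> e \<noteq> f \<Longrightarrow> Ee e \<inter> Ee f = {}"
  shows "matroid_bases (\<Union>e\<in>E. Ee e)
           {B. \<exists>B'\<in>\<B>. \<exists>x :: 'a \<Rightarrow> 'a. (\<forall>e\<in>E - B'. x e \<in> Ee e) \<and>
                 B = (\<Union>e\<in>E. Ee e) - x ` (E - B')}"
proof -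
  interpret series_blocks E Ee
    using disj by unfold_locales
  have "matroid_bases ground (series_bases \<B>)"
    using matroid_bases_series_bases[OF M fin] mem by blast
  then show ?thesis
    unfolding series_bases_def lift_def choice_outside_def ground_def .
qed

end
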